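(* Let $G$ be a graph and $l \ge \gamma(G)$ an integer, and let $A$ and $B$ be dominating sets of $G$ with $|A| = |B| = l$. If there is a path in $D_{l+1}(G)$ joining $A$ and $B$, then there exists a walk between $A$ and $B$ in $D_{l+1}(G)$ all of whose vertices are dominating sets of cardinality $l$ or $l+1$.
   Context: All graphs are finite and simple. A set $S \subseteq V(G)$ is a dominating set of $G$ if every vertex of $V(G)\setminus S$ is adjacent to a vertex of $S$. $\gamma(G)$ is the minimum cardinality of a dominating set of $G$. For an integer $k \ge \gamma(G)$, the $k$-dominating graph $D_k(G)$ is the graph whose vertices are the dominating sets of $G$ of cardinality at most $k$, with two such sets $A,B$ adjacent if and only if their symmetric difference $(A\setminus B)\cup(B\setminus A)$ consists of exactly one vertex of $G$. *)

theory Defs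
  imports Main
begin

definition simple_graph :: "'a set \<Rightarrow> ('a \<Rightarrow> 'a \<Rightarrow> bool) \<Rightarrow> bool" where
  "simple_graph V E \<longleftrightarrow> finite V \<and> (\<forall>u v. E u v \<longrightarrow> u \<in> V \<and> v \<in> V)
     \<and> (\<forall>u v. E u v \<longrightarrow> E v u) \<and> (\<forall>v. \<not> E v v)"

definition dominating_set :: "'a set \<Rightarrow> ('a \<Rightarrow> 'a \<Rightarrow> bool) \<Rightarrow> 'a set \<Rightarrow> bool" where
  "dominating_set V E S \<longleftrightarrow> S \<subseteq> V \<and> (\<forall>v \<in> V - S. \<exists>s \<in> S. E v s)"

definition domination_number :: "'a set \<Rightarrow> ('a \<Rightarrow> 'a \<Rightarrow> bool) \<Rightarrow> nat" where
  "domination_number V E = (LEAST n. \<exists>S. dominating_set V E S \<and> card S = n)"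

definition Dk_vertices :: "'a set \<Rightarrow> ('a \<Rightarrow> 'a \<Rightarrow> bool) \<Rightarrow> nat \<Rightarrow> 'a set set" where
  "Dk_vertices V E k = {S. dominating_set V E S \<and> card S \<le> k}"

definition Dk_adj :: "'a set \<Rightarrow> ('a \<Rightarrow> 'a \<Rightarrow> bool) \<Rightarrow> nat \<Rightarrow> 'a set \<Rightarrow> 'a set \<Rightarrow> bool" where
  "Dk_adj V E k A B \<longleftrightarrow> A \<in> Dk_vertices V E k \<and> B \<in> Dk_vertices V E k
     \<and> (\<exists>x. (A - B) \<union> (B - A) = {x})"

definition Dk_walk :: "'a set \<Rightarrow> ('a \<Rightarrow> 'a \<Rightarrow> bool) \<Rightarrow> nat \<Rightarrow> 'a set list \<Rightarrow> 'a set \<Rightarrow> 'a set \<Rightarrow> bool" where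
  "Dk_walk V E k W A B \<longleftrightarrow> W \<noteq> [] \<and> hd W = A \<and> last W = B
     \<and> set W \<subseteq> Dk_vertices V E k
     \<and> (\<forall>i. Suc i < length W \<longrightarrow> Dk_adj V E k (W ! i) (W ! Suc i))"

definition Dk_path :: "'a set \<Rightarrow> ('a \<Rightarrow> 'a \<Rightarrow> bool) \<Rightarrow> nat \<Rightarrow> 'a set list \<Rightarrow> 'a set \<Rightarrow> 'a set \<Rightarrow> bool" where
  "Dk_path V E k W A B \<longleftrightarrow> Dk_walk V E k W A B \<and> distinct W"

end

theory Submission
  imports Defs
begin

(* Call a walk in D_(l+1)(G) a level walk if all its vertices are
   dominating sets of cardinality l or l+1.  Follow the given path P from A to B
   and maintain a level walk from A to some set T that contains the current
   vertex of P.  When P removes a vertex, T still covers it.  When P adds a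
   vertex x, first shrink T to cardinality l (removing a vertex of T outside the
   current vertex of P, which keeps domination since a subset dominates), then
   add x.  At the end of P we reach T with B \<subseteq> T; as |B| = l, either T = B or
   T = B plus one vertex, and one final step reaches B. *)

lemma dominating_set_finite:
  assumes "finite V" "dominating_set V E S"
  shows "finite S"
  using assms finite_subset unfolding dominating_set_def by blast

lemma dominating_set_mono:
  assumes "dominating_set V E S" "S \<subseteq> T" "T \<subseteq> V"
  shows "dominating_set V E T"
  using assms unfolding dominating_set_def by blast

lemma Dk_adj_insert:
  assumes "dominating_set V E X" "dominating_set V E (insert x X)" "x \<notin> X"
    and "card (insert x X) \<le> k"
  shows "Dk_adj V E k X (insert x X)" "Dk_adj V E k (insert x X) X"
proof -
  have "card X \<le> k" using assms(4) card_insert_le[of X x] by linarith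
  moreover have "(X - insert x X) \<union> (insert x X - X) = {x}"
    "(insert x X - X) \<union> (X - insert x X) = {x}"
    using assms(3) by auto
  ultimately show "Dk_adj V E k X (insert x X)" "Dk_adj V E k (insert x X) X"
    using assms unfolding Dk_adj_def Dk_vertices_def by auto
qed

lemma symdiff_singleton_cases:
  assumes "(X - Y) \<union> (Y - X) = {x}"
  shows "x \<in> X \<and> Y \<subseteq> X \<or> x \<notin> X \<and> Y = insert x X"
proof -
  have only_x: "z \<in> X \<longleftrightarrow> z \<in> Y" if "z \<noteq> x" for z
    using that assms by (simp add: set_eq_iff) metis
  have x_in: "x \<in> X \<longleftrightarrow> x \<notin> Y"
    using assms by (simp add: set_eq_iff) metis
  show ?thesis
  proof (cases "x \<in> X")
    case True
    then have "Y \<subseteq> X" using only_x by (metis subsetI)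
    then show ?thesis using True by blast
  next
    case False
    then have "Y = insert x X" using only_x x_in by (metis insert_iff set_eq_iff)
    then show ?thesis using False by blast
  qed
qed

lemma Dk_walk_snoc:
  assumes walk: "Dk_walk V E k W A T" and adj: "Dk_adj V E k T T'"
  shows "Dk_walk V E k (W @ [T']) A T'"
proof -
  have W: "W \<noteq> []" "hd W = A" "last W = T" "set W \<subseteq> Dk_vertices V E k"
    and steps: "\<And>i. Suc i < length W \<Longrightarrow> Dk_adj V E k (W ! i) (W ! Suc i)"
    using walk unfolding Dk_walk_def by auto
  have "Dk_adj V E k ((W @ [T']) ! i) ((W @ [T']) ! Suc i)"
    if i: "Suc i < length (W @ [T'])" for i
  proof (cases "Suc i < length W")
    case True
    then show ?thesis using steps by (simp add: nth_append)
  next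
    case False
    then have "i = length W - 1" "Suc i = length W" using i by auto
    moreover have "W ! (length W - 1) = T" using W(1,3) by (simp add: last_conv_nth)
    ultimately show ?thesis using adj by (simp add: nth_append)
  qed
  moreover have "T' \<in> Dk_vertices V E k" using adj unfolding Dk_adj_def by auto
  ultimately show ?thesis using W unfolding Dk_walk_def by auto
qed

definition level_walk ::
  "'a set \<Rightarrow> ('a \<Rightarrow> 'a \<Rightarrow> bool) \<Rightarrow> nat \<Rightarrow> 'a set list \<Rightarrow> 'a set \<Rightarrow> 'a set \<Rightarrow> bool" where
  "level_walk V E l W A T \<longleftrightarrow>
     Dk_walk V E (l + 1) W A T \<and> (\<forall>S \<in> set W. card S = l \<or> card S = l + 1)"

lemma level_walk_start:
  assumes "dominating_set V E A" "card A = l"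
  shows "level_walk V E l [A] A A"
  using assms unfolding level_walk_def Dk_walk_def Dk_vertices_def by auto

lemma level_walk_end:
  assumes "level_walk V E l W A T"
  shows "dominating_set V E T" "card T = l \<or> card T = l + 1"
proof -
  have "T \<in> set W" using assms unfolding level_walk_def Dk_walk_def by auto
  then show "dominating_set V E T" "card T = l \<or> card T = l + 1"
    using assms unfolding level_walk_def Dk_walk_def Dk_vertices_def by auto
qed

lemma level_walk_snoc:
  assumes "level_walk V E l W A T" "Dk_adj V E (l + 1) T T'" "card T' = l \<or> card T' = l + 1"
  shows "level_walk V E l (W @ [T']) A T'"
  using assms Dk_walk_snoc unfolding level_walk_def by fastforce

lemma level_walk_shrink:
  assumes "finite V" and walk: "level_walk V E l W A T"
    and S: "dominating_set V E S" "S \<subseteq> T" "card S \<le> l"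
  obtains W' T' where "level_walk V E l W' A T'" "S \<subseteq> T'" "card T' = l"
proof -
  have T: "dominating_set V E T" "card T = l \<or> card T = l + 1"
    using level_walk_end[OF walk] by auto
  have finT: "finite T" using dominating_set_finite[OF \<open>finite V\<close> T(1)] .
  show thesis
  proof (cases "card T = l")
    case True
    then show thesis using that walk S(2) by blast
  next
    case False
    then have cardT: "card T = l + 1" using T(2) by simp
    then have "S \<noteq> T" using S(3) by auto
    then obtain y where y: "y \<in> T" "y \<notin> S" using S(2) by blast
    define U where "U = T - {y}"
    have T_eq: "T = insert y U" and "y \<notin> U" using y unfolding U_def by auto
    have SU: "S \<subseteq> U" using S(2) y unfolding U_def by auto
    have "U \<subseteq> V" using T(1) unfolding U_def dominating_set_def by blast
    then have domU: "dominating_set V E U" using dominating_set_mono[OF S(1) SU] by blast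
    have cardU: "card U = l" using cardT finT y unfolding U_def by simp
    have "Dk_adj V E (l + 1) T U"
      using Dk_adj_insert(2)[OF domU _ \<open>y \<notin> U\<close>] T(1) cardT T_eq by simp
    then have "level_walk V E l (W @ [U]) A U" using level_walk_snoc[OF walk] cardU by simp
    then show thesis using that SU cardU by blast
  qed
qed

lemma level_walk_grow:
  assumes "finite V" and walk: "level_walk V E l W A T" and "S \<subseteq> T"
    and S: "dominating_set V E S" "x \<notin> S"
    and S': "dominating_set V E (insert x S)" "card (insert x S) \<le> l + 1"
  obtains W' T' where "level_walk V E l W' A T'" "insert x S \<subseteq> T'"
proof -
  have "card S \<le> l"
    using S' S(2) dominating_set_finite[OF \<open>finite V\<close> S(1)] by simp
  then obtain W1 U where walk1: "level_walk V E l W1 A U" and "S \<subseteq> U" "card U = l"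
    using level_walk_shrink[OF \<open>finite V\<close> walk S(1) \<open>S \<subseteq> T\<close>] by blast
  show thesis
  proof (cases "x \<in> U")
    case True
    then show thesis using that walk1 \<open>S \<subseteq> U\<close> by blast
  next
    case False
    have domU: "dominating_set V E U" using level_walk_end(1)[OF walk1] .
    have UV: "U \<subseteq> V" and xV: "x \<in> V" using domU S'(1) unfolding dominating_set_def by auto
    have dom_xU: "dominating_set V E (insert x U)" using dominating_set_mono[OF domU] UV xV by blast
    have card_xU: "card (insert x U) = l + 1"
      using \<open>card U = l\<close> False dominating_set_finite[OF \<open>finite V\<close> domU] by simp
    have "Dk_adj V E (l + 1) U (insert x U)"
      using Dk_adj_insert(1)[OF domU dom_xU False] card_xU by simp
    then have "level_walk V E l (W1 @ [insert x U]) A (insert x U)"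
      using level_walk_snoc[OF walk1] card_xU by simp
    then show thesis using that \<open>S \<subseteq> U\<close> by blast
  qed
qed

lemma level_walk_covers_walk:
  assumes "finite V" and P: "Dk_walk V E (l + 1) P A B"
    and A: "dominating_set V E A" "card A = l"
    and "i < length P"
  shows "\<exists>W T. level_walk V E l W A T \<and> P ! i \<subseteq> T"
  using \<open>i < length P\<close>
proof (induction i)
  case 0
  have "P ! 0 = A" using P unfolding Dk_walk_def by (auto simp: hd_conv_nth)
  then show ?case using level_walk_start[OF A] by blast
next
  case (Suc i)
  then obtain W T where walk: "level_walk V E l W A T" and "P ! i \<subseteq> T" by auto
  have adj: "Dk_adj V E (l + 1) (P ! i) (P ! Suc i)"
    using P Suc.prems unfolding Dk_walk_def by auto
  then obtain x where x: "(P ! i - P ! Suc i) \<union> (P ! Suc i - P ! i) = {x}"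
    unfolding Dk_adj_def by auto
  consider "P ! Suc i \<subseteq> P ! i" | "x \<notin> P ! i" "P ! Suc i = insert x (P ! i)"
    using symdiff_singleton_cases[OF x] by blast
  then show ?case
  proof cases
    case 1
    then show ?thesis using walk \<open>P ! i \<subseteq> T\<close> by blast
  next
    case 2
    then have "dominating_set V E (P ! i)" "dominating_set V E (insert x (P ! i))"
      "card (insert x (P ! i)) \<le> l + 1"
      using adj unfolding Dk_adj_def Dk_vertices_def by auto
    then obtain W' T' where "level_walk V E l W' A T'" "insert x (P ! i) \<subseteq> T'"
      using level_walk_grow[OF \<open>finite V\<close> walk \<open>P ! i \<subseteq> T\<close> _ \<open>x \<notin> P ! i\<close>] by blast
    then show ?thesis using 2 by auto
  qed
qed

lemma level_walk_close:
  assumes "finite V" and walk: "level_walk V E l W A T" and "B \<subseteq> T"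
    and B: "dominating_set V E B" "card B = l"
  shows "\<exists>W'. level_walk V E l W' A B"
proof (cases "T = B")
  case True
  then show ?thesis using walk by blast
next
  case False
  have T: "dominating_set V E T" "card T = l \<or> card T = l + 1"
    using level_walk_end[OF walk] by auto
  have finT: "finite T" using dominating_set_finite[OF \<open>finite V\<close> T(1)] .
  obtain y where y: "y \<in> T" "y \<notin> B" using False \<open>B \<subseteq> T\<close> by blast
  have "card T \<noteq> l" using card_subset_eq[OF finT \<open>B \<subseteq> T\<close>] False B(2) by auto
  then have cardT: "card T = l + 1" using T(2) by simp
  have "T - {y} = B"
    using card_subset_eq[of "T - {y}" B] finT cardT y \<open>B \<subseteq> T\<close> B(2) by auto
  then have T_eq: "T = insert y B" using y by auto
  have "Dk_adj V E (l + 1) T B"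
    using Dk_adj_insert(2)[OF B(1) _ y(2)] T(1) cardT T_eq by simp
  then show ?thesis using level_walk_snoc[OF walk] B(2) by blast
qed

theorem lemma10:
  fixes V :: "'a set" and E :: "'a \<Rightarrow> 'a \<Rightarrow> bool" and l :: nat and A B :: "'a set"
  assumes "simple_graph V E"
    and "l \<ge> domination_number V E"
    and "dominating_set V E A" and "dominating_set V E B"
    and "card A = l" and "card B = l"
    and "\<exists>P. Dk_path V E (l + 1) P A B"
  shows "\<exists>W. Dk_walk V E (l + 1) W A B \<and> (\<forall>S \<in> set W. card S = l \<or> card S = l + 1)"
proof -
  have finV: "finite V" using assms(1) unfolding simple_graph_def by auto
  obtain P where P: "Dk_walk V E (l + 1) P A B" using assms(7) unfolding Dk_path_def by auto
  have "P \<noteq> []" "P ! (length P - 1) = B" using P unfolding Dk_walk_def by (auto simp: last_conv_nth)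
  then obtain W T where "level_walk V E l W A T" "B \<subseteq> T"
    using level_walk_covers_walk[OF finV P assms(3,5), of "length P - 1"] by auto
  then obtain W' where "level_walk V E l W' A B"
    using level_walk_close[OF finV _ _ assms(4,6)] by blast
  then show ?thesis unfolding level_walk_def by blast
qed

end
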